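(* Let $\mathcal W=\mathcal U\text{-}\sum_n\mathcal V_n$ be a sisnis ultrafilter on $\omega^2$. Then $\mathcal W$ has a basis consisting of sets in $\mathbb P$; that is, for every $A\in\mathcal W$ there is $B\subseteq A$ with $B\in\mathcal W\cap\mathbb P$.
   Context: Ultrafilters on countably infinite sets are assumed nonprincipal (containing all cofinite sets). An ultrafilter $\mathcal U$ on $\omega$ is selective if for every function $f$ on $\omega$ there is $A\in\mathcal U$ with $f\restriction A$ one-to-one or constant. For $A\subseteq\omega^2$ and $x\in\omega$, the (vertical) section is $A(x)=\{y\in\omega:\langle x,y\rangle\in A\}$. For ultrafilters $\mathcal U,\mathcal V_n$ on $\omega$, the sum $\mathcal U\text{-}\sum_n\mathcal V_n$ is the ultrafilter $\{A\subseteq\omega^2:\{n:A(n)\in\mathcal V_n\}\in\mathcal U\}$ on $\omega^2$. A sisnis ultrafilter is one of the form $\mathcal U\text{-}\sum_n\mathcal V_n$ where $\mathcal U$ and all $\mathcal V_n$ are selective ultrafilters on $\omega$ and, for $m\neq n$, there is no permutation $f$ of $\omega$ with $f(\mathcal V_m)=\mathcal V_n$ (here $f(\mathcal V)=\{B:f^{-1}(B)\in\mathcal V\}$). $\mathbb P$ is the set of all $A\subseteq\omega^2$ such that: (1) $A$ has infinitely many infinite sections and no nonempty finite sections; (2) the sections of $A$ are pairwise disjoint; (3) every $\langle x,y\rangle\in A$ has $x<y$; (4) for any $\langle x,y\rangle,\langle x',y'\rangle\in A$, $x\neq y'$. *)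

theory Defs
  imports Main
begin

text \<open>Ultrafilters on a countably infinite type, represented as sets of sets.
  By convention they are nonprincipal (contain all cofinite sets).\<close>

definition ultrafilter_on :: "'a set set \<Rightarrow> bool" where
  "ultrafilter_on U \<longleftrightarrow>
     UNIV \<in> U \<and> {} \<notin> U \<and>
     (\<forall>A B. A \<in> U \<and> A \<subseteq> B \<longrightarrow> B \<in> U) \<and>
     (\<forall>A B. A \<in> U \<and> B \<in> U \<longrightarrow> A \<inter> B \<in> U) \<and>
     (\<forall>A. A \<in> U \<or> - A \<in> U) \<and>
     (\<forall>A. finite (- A) \<longrightarrow> A \<in> U)"

definition selective :: "nat set set \<Rightarrow> bool" where
  "selective U \<longleftrightarrow> ultrafilter_on U \<and>
     (\<forall>f :: nat \<Rightarrow> nat. \<exists>A \<in> U. inj_on f A \<or> (\<exists>c. \<forall>x \<in> A. f x = c))"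

definition uf_image :: "('a \<Rightarrow> 'b) \<Rightarrow> 'a set set \<Rightarrow> 'b set set" where
  "uf_image f V = {B. f -` B \<in> V}"

definition vsection :: "(nat \<times> nat) set \<Rightarrow> nat \<Rightarrow> nat set" where
  "vsection A x = {y. (x, y) \<in> A}"

definition uf_sum :: "nat set set \<Rightarrow> (nat \<Rightarrow> nat set set) \<Rightarrow> (nat \<times> nat) set set" where
  "uf_sum U V = {A. {n. vsection A n \<in> V n} \<in> U}"

definition sisnis :: "nat set set \<Rightarrow> (nat \<Rightarrow> nat set set) \<Rightarrow> bool" where
  "sisnis U V \<longleftrightarrow> selective U \<and> (\<forall>n. selective (V n)) \<and>
     (\<forall>m n. m \<noteq> n \<longrightarrow> \<not> (\<exists>f. bij f \<and> uf_image f (V m) = V n))"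

definition PP :: "(nat \<times> nat) set set" where
  "PP = {A.
     infinite {x. infinite (vsection A x)} \<and>
     (\<forall>x. vsection A x \<noteq> {} \<longrightarrow> infinite (vsection A x)) \<and>
     (\<forall>x x'. x \<noteq> x' \<longrightarrow> vsection A x \<inter> vsection A x' = {}) \<and>
     (\<forall>x y. (x, y) \<in> A \<longrightarrow> x < y) \<and>
     (\<forall>x y x' y'. (x, y) \<in> A \<and> (x', y') \<in> A \<longrightarrow> x \<noteq> y')}"

end

theory Submission
  imports Defs "HOL-Library.Disjoint_Sets"
begin

text \<open>A selective ultrafilter \<open>\<U>\<close> is a P-point, so it can be separated by a single set from
  countably many ultrafilters different from it. Applied to the pairwise distinct \<open>\<V>\<^sub>n\<close> this
  yields pairwise disjoint sets \<open>D\<^sub>n \<in> \<V>\<^sub>n\<close>, and applied to \<open>\<U>\<close> against the \<open>\<V>\<^sub>n\<close> it yields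
  \<open>Z \<in> \<U>\<close> with \<open>-Z \<in> \<V>\<^sub>n\<close> for \<open>\<U>\<close>-almost all \<open>n\<close>. Shrinking the sections of \<open>A \<in> \<U>-\<Sum>\<V>\<^sub>n\<close>
  into \<open>D\<^sub>n - Z\<close> above the diagonal, and keeping only first coordinates in \<open>Z\<close>, gives a
  subset of \<open>A\<close> in the sum that lies in \<open>\<bbbP>\<close>.\<close>

lemma ultrafilter_on_superset: "ultrafilter_on F \<Longrightarrow> S \<in> F \<Longrightarrow> S \<subseteq> T \<Longrightarrow> T \<in> F"
  unfolding ultrafilter_on_def by blast

lemma ultrafilter_on_Int: "ultrafilter_on F \<Longrightarrow> S \<in> F \<Longrightarrow> T \<in> F \<Longrightarrow> S \<inter> T \<in> F"
  unfolding ultrafilter_on_def by blast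

lemma ultrafilter_on_cofinite: "ultrafilter_on F \<Longrightarrow> finite (- S) \<Longrightarrow> S \<in> F"
  unfolding ultrafilter_on_def by blast

lemma ultrafilter_on_Compl: "ultrafilter_on F \<Longrightarrow> S \<notin> F \<Longrightarrow> - S \<in> F"
  unfolding ultrafilter_on_def by blast

lemma ultrafilter_on_empty: "ultrafilter_on F \<Longrightarrow> {} \<notin> F"
  unfolding ultrafilter_on_def by blast

lemma ultrafilter_on_Compl_iff: "ultrafilter_on F \<Longrightarrow> - S \<in> F \<longleftrightarrow> S \<notin> F"
  using ultrafilter_on_Compl ultrafilter_on_Int ultrafilter_on_empty by fastforce

lemma ultrafilter_on_infinite: "ultrafilter_on F \<Longrightarrow> S \<in> F \<Longrightarrow> infinite S"
  using ultrafilter_on_cofinite[of F "- S"] ultrafilter_on_Compl_iff[of F S] by auto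

lemma ultrafilter_on_INT:
  assumes "ultrafilter_on F" and "finite I" and "\<And>i. i \<in> I \<Longrightarrow> S i \<in> F"
  shows "(\<Inter>i\<in>I. S i) \<in> F"
  using assms(2,3)
proof (induction I rule: finite_induct)
  case empty
  then show ?case using assms(1) unfolding ultrafilter_on_def by simp
next
  case (insert x I)
  then show ?case using ultrafilter_on_Int[OF assms(1)] by simp
qed

lemma ultrafilter_on_almost_subset:
  assumes "ultrafilter_on F" and "B \<in> F" and "finite (B - A)"
  shows "A \<in> F"
proof -
  have "- (B - A) \<in> F" using assms(1,3) by (intro ultrafilter_on_cofinite) (simp_all add: Diff_eq)
  then have "B \<inter> - (B - A) \<in> F" using assms(1,2) ultrafilter_on_Int by blast
  then show ?thesis using assms(1) ultrafilter_on_superset by blast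
qed

text \<open>Selectivity is applied to the function recording the first stage at which a point leaves
  the decreasing sequence of finite intersections.\<close>

lemma selective_P_point:
  fixes A :: "nat \<Rightarrow> nat set"
  assumes sel: "selective p" and A: "\<And>n. A n \<in> p"
  shows "\<exists>B\<in>p. \<forall>n. finite (B - A n)"
proof -
  have up: "ultrafilter_on p" using sel selective_def by blast
  define E where "E n = (\<Inter>k\<in>{..n}. A k)" for n
  have E_in: "E n \<in> p" for n unfolding E_def by (intro ultrafilter_on_INT[OF up]) (simp_all add: A)
  define f where "f x = (if \<forall>n. x \<in> E n then 0 else Suc (LEAST n. x \<notin> E n))" for x
  have f_leave: "f x = Suc (LEAST m. x \<notin> E m)" if "x \<notin> E n" for x n
    using that unfolding f_def by auto
  obtain B where B: "B \<in> p" and fB: "inj_on f B \<or> (\<exists>c. \<forall>x\<in>B. f x = c)"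
    using sel unfolding selective_def by blast
  have B_leaves: "B - E n \<subseteq> f -` {1..Suc n} \<inter> B" for n
  proof
    fix x assume x: "x \<in> B - E n"
    then have "(LEAST m. x \<notin> E m) \<le> n" by (simp add: Least_le)
    with x f_leave[of x n] show "x \<in> f -` {1..Suc n} \<inter> B" by simp
  qed
  have finite_leaving: "finite (B - E n)" for n
    using fB
  proof
    assume "inj_on f B"
    then show ?thesis using finite_subset[OF B_leaves finite_vimage_IntI] by blast
  next
    assume "\<exists>c. \<forall>x\<in>B. f x = c"
    then obtain c where c: "\<And>x. x \<in> B \<Longrightarrow> f x = c" by blast
    show ?thesis
    proof (cases c)
      case 0
      then have "B - E n = {}" using c f_leave by fastforce
      then show ?thesis by (simp only: finite.emptyI)
    next
      case (Suc k)
      have "x \<notin> E k" if x: "x \<in> B" for x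
      proof
        assume "x \<in> E k"
        from c[OF x] Suc have "f x = Suc k" by simp
        then obtain n where "x \<notin> E n" and "(LEAST m. x \<notin> E m) = k"
          unfolding f_def by (auto split: if_splits)
        then show False using LeastI[of "\<lambda>m. x \<notin> E m" n] \<open>x \<in> E k\<close> by simp
      qed
      then have "B \<inter> E k = {}" by blast
      then show ?thesis using ultrafilter_on_Int[OF up B E_in[of k]] ultrafilter_on_empty[OF up] by simp
    qed
  qed
  have "B - A n \<subseteq> B - E n" for n unfolding E_def by auto
  then have "finite (B - A n)" for n using finite_leaving finite_subset by metis
  then show ?thesis using B by blast
qed

lemma selective_separating_set:
  fixes q :: "nat \<Rightarrow> nat set set"
  assumes sel: "selective p" and q: "\<And>n. ultrafilter_on (q n)" and ne: "\<And>n. n \<in> I \<Longrightarrow> q n \<noteq> p"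
  shows "\<exists>S\<in>p. \<forall>n\<in>I. S \<notin> q n"
proof -
  have up: "ultrafilter_on p" using sel selective_def by blast
  have "\<exists>S. S \<in> p \<and> (n \<in> I \<longrightarrow> S \<notin> q n)" for n
  proof (cases "n \<in> I")
    case False
    then show ?thesis using up unfolding ultrafilter_on_def by blast
  next
    case True
    then obtain S where "S \<in> q n \<and> S \<notin> p \<or> S \<in> p \<and> S \<notin> q n" using ne by blast
    then show ?thesis using ultrafilter_on_Compl_iff[OF up] ultrafilter_on_Compl_iff[OF q] by blast
  qed
  then obtain A where A: "\<And>n. A n \<in> p" "\<And>n. n \<in> I \<Longrightarrow> A n \<notin> q n" by metis
  obtain S where S: "S \<in> p" "\<And>n. finite (S - A n)" using selective_P_point[OF sel, of A] A(1) by blast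
  have "S \<notin> q n" if "n \<in> I" for n
    using ultrafilter_on_almost_subset[OF q _ S(2)] A(2)[OF that] by blast
  then show ?thesis using S(1) by blast
qed

lemma sisnis_inj:
  assumes "sisnis U V"
  shows "inj V"
proof
  fix m n assume "V m = V n"
  moreover have "uf_image id (V m) = V m" unfolding uf_image_def by simp
  ultimately show "m = n" using assms bij_id unfolding sisnis_def by metis
qed

lemma sisnis_disjoint_family:
  assumes "sisnis U V"
  shows "\<exists>D. (\<forall>n. D n \<in> V n) \<and> disjoint_family D"
proof -
  have sV: "\<And>n. selective (V n)" and uV: "\<And>n. ultrafilter_on (V n)"
    using assms unfolding sisnis_def selective_def by blast+
  have "\<exists>C\<in>V n. \<forall>m\<in>-{n}. C \<notin> V m" for n
  proof (rule selective_separating_set[OF sV uV])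
    show "V m \<noteq> V n" if "m \<in> -{n}" for m using that inj_eq[OF sisnis_inj[OF assms]] by auto
  qed
  then obtain C where C: "\<forall>n. C n \<in> V n \<and> (\<forall>m\<in>-{n}. C n \<notin> V m)" by metis
  have "disjointed C n \<in> V n" for n
  proof -
    have "- C m \<in> V n" if "m \<in> {0..<n}" for m
      using that C ultrafilter_on_Compl[OF uV] by auto
    then have "(\<Inter>m\<in>{0..<n}. - C m) \<in> V n" by (intro ultrafilter_on_INT[OF uV]) auto
    then have "C n \<inter> (\<Inter>m\<in>{0..<n}. - C m) \<in> V n" using C ultrafilter_on_Int[OF uV] by blast
    then show ?thesis unfolding disjointed_def by (simp add: Diff_eq)
  qed
  then show ?thesis using disjoint_family_disjointed by blast
qed

lemma sisnis_separating_set: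
  assumes "sisnis U V"
  shows "\<exists>Z\<in>U. {n. - Z \<in> V n} \<in> U"
proof -
  have sU: "selective U" and uU: "ultrafilter_on U" and uV: "\<And>n. ultrafilter_on (V n)"
    using assms unfolding sisnis_def selective_def by blast+
  have "\<exists>Z\<in>U. \<forall>n\<in>{n. V n \<noteq> U}. Z \<notin> V n" by (rule selective_separating_set[OF sU uV]) simp
  then obtain Z where Z: "Z \<in> U" "\<And>n. V n \<noteq> U \<Longrightarrow> Z \<notin> V n" by blast
  have "finite (V -` {U})" using finite_vimageI[OF _ sisnis_inj[OF assms]] by blast
  then have "{n. V n \<noteq> U} \<in> U" using ultrafilter_on_cofinite[OF uU] by (simp add: vimage_def Collect_neg_eq)
  moreover have "{n. V n \<noteq> U} \<subseteq> {n. - Z \<in> V n}" using Z(2) ultrafilter_on_Compl[OF uV] by blast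
  ultimately show ?thesis using Z(1) ultrafilter_on_superset[OF uU] by blast
qed

lemma Sigma_in_uf_sum_PP:
  assumes uU: "ultrafilter_on U" and uV: "\<And>n. ultrafilter_on (V n)"
    and Y: "Y \<in> U" and S: "\<And>n. n \<in> Y \<Longrightarrow> S n \<in> V n" and disj: "disjoint_family S"
    and above: "\<And>n y. y \<in> S n \<Longrightarrow> n < y \<and> y \<notin> Y"
  shows "Sigma Y S \<in> uf_sum U V" and "Sigma Y S \<in> PP"
proof -
  have sec: "vsection (Sigma Y S) n = (if n \<in> Y then S n else {})" for n
    unfolding vsection_def by auto
  have inf: "infinite (S n)" if "n \<in> Y" for n using S[OF that] ultrafilter_on_infinite[OF uV] by blast
  have "Y \<subseteq> {n. vsection (Sigma Y S) n \<in> V n}" using S sec by auto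
  then show "Sigma Y S \<in> uf_sum U V" unfolding uf_sum_def using ultrafilter_on_superset[OF uU Y] by blast
  have "Y \<subseteq> {x. infinite (vsection (Sigma Y S) x)}" using inf sec by simp
  then have "infinite {x. infinite (vsection (Sigma Y S) x)}"
    using ultrafilter_on_infinite[OF uU Y] finite_subset by blast
  moreover have "\<forall>x. vsection (Sigma Y S) x \<noteq> {} \<longrightarrow> infinite (vsection (Sigma Y S) x)"
    using inf sec by simp
  moreover have "\<forall>x x'. x \<noteq> x' \<longrightarrow> vsection (Sigma Y S) x \<inter> vsection (Sigma Y S) x' = {}"
    using disj unfolding sec disjoint_family_on_def by auto
  moreover have "\<forall>x y. (x, y) \<in> Sigma Y S \<longrightarrow> x < y" using above by blast
  moreover have "\<forall>x y x' y'. (x, y) \<in> Sigma Y S \<and> (x', y') \<in> Sigma Y S \<longrightarrow> x \<noteq> y'"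
    using above by blast
  ultimately show "Sigma Y S \<in> PP" unfolding PP_def by blast
qed

theorem mainTheorem1:
  fixes U :: "nat set set" and V :: "nat \<Rightarrow> nat set set"
  assumes "sisnis U V"
  shows "\<forall>A \<in> uf_sum U V. \<exists>B. B \<subseteq> A \<and> B \<in> uf_sum U V \<and> B \<in> PP"
proof
  fix A assume A: "A \<in> uf_sum U V"
  have uU: "ultrafilter_on U" and uV: "\<And>n. ultrafilter_on (V n)"
    using assms unfolding sisnis_def selective_def by blast+
  obtain D where D: "\<And>n. D n \<in> V n" "disjoint_family D" using sisnis_disjoint_family[OF assms] by blast
  obtain Z where Z: "Z \<in> U" "{n. - Z \<in> V n} \<in> U" using sisnis_separating_set[OF assms] by blast
  define Y where "Y = {n. vsection A n \<in> V n} \<inter> Z \<inter> {n. - Z \<in> V n}"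
  define S where "S n = vsection A n \<inter> D n \<inter> - Z \<inter> {n<..}" for n
  have Y: "Y \<in> U" using A Z ultrafilter_on_Int[OF uU] unfolding Y_def uf_sum_def by blast
  have S: "S n \<in> V n" if "n \<in> Y" for n
  proof -
    have "{n<..} \<in> V n" using ultrafilter_on_cofinite[OF uV] by (simp add: Compl_greaterThan)
    then show ?thesis using that D(1) ultrafilter_on_Int[OF uV] unfolding Y_def S_def by simp
  qed
  have disj: "disjoint_family S" using D(2) unfolding S_def disjoint_family_on_def by blast
  have above: "n < y \<and> y \<notin> Y" if "y \<in> S n" for n y using that unfolding S_def Y_def by auto
  have "Sigma Y S \<subseteq> A" unfolding S_def vsection_def by auto
  with Sigma_in_uf_sum_PP[OF uU uV Y S disj above]
  show "\<exists>B. B \<subseteq> A \<and> B \<in> uf_sum U V \<and> B \<in> PP" by blast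
qed

end
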